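(* Let $n$ and $k$ be positive integers. Then the posets $\widetilde{\mathrm{NC}}^{(2k)}(2n+1)$ and $\mathrm{NC}^{(2k)}(n;k)$ (defined in the context) are isomorphic.
   Context: For a positive integer $N$, a partition $\pi$ of $[N]=\{1,\dots,N\}$ is noncrossing if there are no $a<b<c<d$ with $a,c$ in one block and $b,d$ in a different block. All posets of partitions are ordered by refinement ($\pi\le\sigma$ if every block of $\sigma$ is a union of blocks of $\pi$). Let $m=k(2n+1)$ and let $\rho$ be the $180^\circ$ rotation of $[2m]$ arranged on a circle: $\rho(i)=i+m$ for $1\le i\le m$, $\rho(i)=i-m$ for $m<i\le 2m$. $\widetilde{\mathrm{NC}}^{(2k)}(2n+1)$ is the poset of noncrossing partitions of $[2k(2n+1)]$ all of whose block sizes are divisible by $2k$ and which are invariant under $\rho$ (i.e. $\rho(B)$ is a block whenever $B$ is). For integers $K,r$ with $0<r<K$, $\mathrm{NC}^{(K)}(n;r)$ is the poset of noncrossing partitions of $[Kn+r]$ in which the sizes of all but one of the blocks are divisible by $K$; here $K=2k$, $r=k$. *)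

theory Defs
  imports Main "HOL-Library.Disjoint_Sets"
begin

definition noncrossing :: "nat set set \<Rightarrow> bool" where
  "noncrossing P \<longleftrightarrow>
     \<not> (\<exists>a b c d B B'. a < b \<and> b < c \<and> c < d \<and> B \<in> P \<and> B' \<in> P \<and> B \<noteq> B' \<and>
                       a \<in> B \<and> c \<in> B \<and> b \<in> B' \<and> d \<in> B')"

definition refines :: "nat set set \<Rightarrow> nat set set \<Rightarrow> bool" where
  "refines \<pi> \<sigma> \<longleftrightarrow> (\<forall>B\<in>\<sigma>. \<exists>S. S \<subseteq> \<pi> \<and> B = \<Union>S)"

definition rot :: "nat \<Rightarrow> nat \<Rightarrow> nat" where
  "rot m i = (if i \<le> m then i + m else i - m)"

text \<open>The poset NC-tilde^(2k)(2n+1) (its underlying set; order is refines).\<close>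
definition NC_tilde :: "nat \<Rightarrow> nat \<Rightarrow> nat set set set" where
  "NC_tilde k n = (let m = k * (2 * n + 1) in
     {P. partition_on {1..2 * m} P \<and> noncrossing P \<and>
         (\<forall>B\<in>P. (2 * k) dvd card B) \<and> (\<forall>B\<in>P. rot m ` B \<in> P)})"

text \<open>The poset NC^(K)(n;r) (its underlying set; order is refines).\<close>
definition NC_r :: "nat \<Rightarrow> nat \<Rightarrow> nat \<Rightarrow> nat set set set" where
  "NC_r K n r = {P. partition_on {1..K * n + r} P \<and> noncrossing P \<and>
         (\<exists>B0\<in>P. \<forall>B\<in>P. B \<noteq> B0 \<longrightarrow> K dvd card B)}"

definition refinement_posets_iso :: "nat set set set \<Rightarrow> nat set set set \<Rightarrow> bool" where
  "refinement_posets_iso A B \<longleftrightarrow>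
     (\<exists>f. bij_betw f A B \<and> (\<forall>x\<in>A. \<forall>y\<in>A. refines x y \<longleftrightarrow> refines (f x) (f y)))"

end

theory Submission
  imports Defs
begin

text \<open>Folding the circle [2m] onto [m] by x \<mapsto> x mod m sends a centrally symmetric noncrossing
  partition to a noncrossing partition of [m]: each pair of blocks B, rot B becomes a single block of
  the same size, and the unique rotation-invariant block Z becomes a block of half its size. Since
  m = k(2n+1) is not divisible by 2k, a symmetric partition with all block sizes divisible by 2k has
  such a central block, whose image is the exceptional block of size k mod 2k. Conversely, a
  partition of [m] with exceptional block E is unfolded by placing every other block in the window
  of length m starting at min E, together with its rotation, and taking E \<union> rot E as the central
  block. Folding reflects refinement because the diameter through a point z of the central block
  and z + m separates every symmetric pair B, rot B.\<close>

section \<open>Partitions and refinement\<close>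

lemma partition_on_block_eq:
  assumes "partition_on A P" "B \<in> P" "B' \<in> P" "x \<in> B" "x \<in> B'"
  shows "B = B'"
  using assms partition_onD2 disjointD by blast

lemma partition_on_finite_blocks:
  assumes "partition_on A P" "finite A"
  shows "finite P" "\<forall>B\<in>P. finite B"
  using finite_elements[OF assms(2,1)] partition_onD1[OF assms(1)] assms(2)
  by (auto intro: rev_finite_subset)

lemma partition_on_block_subset: "partition_on A P \<Longrightarrow> B \<in> P \<Longrightarrow> B \<subseteq> A"
  using partition_onD1 by blast

lemma partition_on_covers: "partition_on A P \<Longrightarrow> x \<in> A \<Longrightarrow> \<exists>B\<in>P. x \<in> B"
  using partition_onD1 by blast

lemma partition_on_block_nonempty: "partition_on A P \<Longrightarrow> B \<in> P \<Longrightarrow> B \<noteq> {}"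
  using partition_onD3 by blast

lemma refines_iff_partition_refines:
  assumes P: "partition_on A P" and Q: "partition_on A Q"
  shows "refines P Q \<longleftrightarrow> Disjoint_Sets.refines A P Q"
proof
  assume r: "refines P Q"
  have "\<exists>B'\<in>Q. B \<subseteq> B'" if B: "B \<in> P" for B
  proof -
    obtain x where x: "x \<in> B" using partition_on_block_nonempty[OF P B] by blast
    then have "x \<in> A" using partition_on_block_subset[OF P B] by blast
    then obtain B' where B': "B' \<in> Q" "x \<in> B'" using partition_on_covers[OF Q] by blast
    then obtain S where S: "S \<subseteq> P" "B' = \<Union>S" using r unfolding refines_def by blast
    then obtain G where G: "G \<in> S" "x \<in> G" using B' by auto
    moreover have "G \<in> P" using G S by blast
    ultimately have "G = B" using partition_on_block_eq[OF P _ B _ x] by blast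
    then show ?thesis using G S B' by blast
  qed
  then show "Disjoint_Sets.refines A P Q" using P Q unfolding Disjoint_Sets.refines_def by blast
next
  assume r: "Disjoint_Sets.refines A P Q"
  have "B' = \<Union>{B\<in>P. B \<subseteq> B'}" if "B' \<in> Q" for B'
    using partition_onD1[OF refines_obtains_subset[OF r that]] .
  then show "refines P Q" unfolding refines_def by (metis (no_types, lifting) mem_Collect_eq subsetI)
qed

lemma refines_antisym:
  assumes "partition_on A P" "partition_on A Q" "refines P Q" "refines Q P"
  shows "P = Q"
  using refines_asym[of A P Q] assms(3,4)
    refines_iff_partition_refines[OF assms(1,2)] refines_iff_partition_refines[OF assms(2,1)]
  by blast

lemma refines_refl: "refines P P"
  unfolding refines_def by (intro ballI exI[of _ "{B}" for B]) simp

lemma refinement_posets_iso_onto: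
  assumes "\<And>P. P \<in> A \<Longrightarrow> partition_on S P"
    and "\<And>P P'. P \<in> A \<Longrightarrow> P' \<in> A \<Longrightarrow> refines P P' \<longleftrightarrow> refines (f P) (f P')"
    and "f ` A = B"
  shows "refinement_posets_iso A B"
proof -
  have "inj_on f A"
  proof (rule inj_onI)
    fix P P' assume "P \<in> A" "P' \<in> A" "f P = f P'"
    then show "P = P'" using assms(1,2) refines_antisym refines_refl by metis
  qed
  then show ?thesis unfolding refinement_posets_iso_def bij_betw_def using assms(2,3) by blast
qed

lemma card_Union_mod_eq_block:
  assumes "finite P" "\<forall>B\<in>P. finite B" "disjoint P" "B0 \<in> P"
    "\<forall>B\<in>P. B \<noteq> B0 \<longrightarrow> d dvd card B"
  shows "card (\<Union>P) mod d = card B0 mod d"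
proof -
  have "card (\<Union>P) = card B0 + sum card (P - {B0})"
    using assms by (simp add: card_Union_disjoint sum.remove)
  moreover have "d dvd sum card (P - {B0})" using assms by (intro dvd_sum) auto
  ultimately show ?thesis by auto
qed

lemma dvd_card_Union:
  assumes "finite P" "\<forall>B\<in>P. finite B" "disjoint P" "\<forall>B\<in>P. d dvd card B"
  shows "d dvd card (\<Union>P)"
  using assms by (simp add: card_Union_disjoint dvd_sum)

section \<open>Crossings\<close>

definition crosses :: "nat set \<Rightarrow> nat set \<Rightarrow> bool" where
  "crosses X Y \<longleftrightarrow> (\<exists>a b c d. a < b \<and> b < c \<and> c < d \<and> a \<in> X \<and> c \<in> X \<and> b \<in> Y \<and> d \<in> Y)"

lemma noncrossing_iff_not_crosses:
  "noncrossing P \<longleftrightarrow> (\<forall>B\<in>P. \<forall>B'\<in>P. B \<noteq> B' \<longrightarrow> \<not> crosses B B')"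
  unfolding noncrossing_def crosses_def by meson

lemma crosses_mono: "crosses X Y \<Longrightarrow> X \<subseteq> X' \<Longrightarrow> Y \<subseteq> Y' \<Longrightarrow> crosses X' Y'"
  unfolding crosses_def by (elim exE conjE) (intro exI conjI, assumption+, auto)

text \<open>A map that is increasing below and above a cut point t and sends everything above the cut
  below everything under it is a rotation of the circle, so it preserves crossings up to order.\<close>
lemma crosses_image_rotation:
  fixes h :: "nat \<Rightarrow> nat"
  assumes below: "\<And>x y. x \<in> D \<Longrightarrow> y \<in> D \<Longrightarrow> x < y \<Longrightarrow> y < t \<Longrightarrow> h x < h y"
    and above: "\<And>x y. x \<in> D \<Longrightarrow> y \<in> D \<Longrightarrow> x < y \<Longrightarrow> t \<le> x \<Longrightarrow> h x < h y"
    and jump: "\<And>x y. x \<in> D \<Longrightarrow> y \<in> D \<Longrightarrow> x < t \<Longrightarrow> t \<le> y \<Longrightarrow> h y < h x"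
    and "X \<subseteq> D" "Y \<subseteq> D" "crosses X Y"
  shows "crosses (h ` X) (h ` Y) \<or> crosses (h ` Y) (h ` X)"
proof -
  obtain a b c d where o: "a < b" "b < c" "c < d" and m: "a \<in> X" "c \<in> X" "b \<in> Y" "d \<in> Y"
    using \<open>crosses X Y\<close> unfolding crosses_def by blast
  have D: "a \<in> D" "b \<in> D" "c \<in> D" "d \<in> D" using m assms(4,5) by auto
  have im: "h a \<in> h ` X" "h c \<in> h ` X" "h b \<in> h ` Y" "h d \<in> h ` Y" using m by auto
  consider "d < t" | "c < t" "t \<le> d" | "b < t" "t \<le> c" | "a < t" "t \<le> b" | "t \<le> a"
    using o by linarith
  then show ?thesis
  proof cases
    case 1
    then have "h a < h b" "h b < h c" "h c < h d"
      using below[OF D(1,2)] below[OF D(2,3)] below[OF D(3,4)] o by auto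
    then show ?thesis using im unfolding crosses_def by blast
  next
    case 2
    then have "h d < h a" "h a < h b" "h b < h c"
      using below[OF D(1,2)] below[OF D(2,3)] jump[OF D(1,4)] o by auto
    then show ?thesis using im unfolding crosses_def by blast
  next
    case 3
    then have "h c < h d" "h d < h a" "h a < h b"
      using below[OF D(1,2)] above[OF D(3,4)] jump[OF D(1,4)] o by auto
    then show ?thesis using im unfolding crosses_def by blast
  next
    case 4
    then have "h b < h c" "h c < h d" "h d < h a"
      using above[OF D(2,3)] above[OF D(3,4)] jump[OF D(1,4)] o by auto
    then show ?thesis using im unfolding crosses_def by blast
  next
    case 5
    then have "h a < h b" "h b < h c" "h c < h d"
      using above[OF D(1,2)] above[OF D(2,3)] above[OF D(3,4)] o by auto
    then show ?thesis using im unfolding crosses_def by blast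
  qed
qed

lemma not_crosses_inside_outside:
  assumes "\<And>x. x \<in> X \<Longrightarrow> a < x \<and> x < b" and "\<And>y. y \<in> Y \<Longrightarrow> y < a \<or> b < y"
  shows "\<not> crosses X Y"
proof
  assume "crosses X Y"
  then obtain p q r s where "p < q" "q < r" "r < s" "p \<in> X" "r \<in> X" "q \<in> Y"
    unfolding crosses_def by blast
  then show False using assms by force
qed

lemma not_crosses_outside_inside:
  assumes "\<And>x. x \<in> X \<Longrightarrow> a < x \<and> x < b" and "\<And>y. y \<in> Y \<Longrightarrow> y < a \<or> b < y"
  shows "\<not> crosses Y X"
proof
  assume "crosses Y X"
  then obtain p q r s where "p < q" "q < r" "r < s" "q \<in> X" "s \<in> X" "r \<in> Y"
    unfolding crosses_def by blast
  then show False using assms by force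
qed

section \<open>Folding the circle\<close>

definition fold_pt :: "nat \<Rightarrow> nat \<Rightarrow> nat" where
  "fold_pt m x = (if x \<le> m then x else x - m)"

text \<open>On {1..m}, window_pt m z inverts fold_pt m with values in the window {z..<z+m}.\<close>
definition window_pt :: "nat \<Rightarrow> nat \<Rightarrow> nat \<Rightarrow> nat" where
  "window_pt m z x = (if x < z then x + m else x)"

definition fold_part :: "nat \<Rightarrow> nat set set \<Rightarrow> nat set set" where
  "fold_part m P = image (fold_pt m) ` P"

lemma rot_in_range: "x \<in> {1..2*m} \<Longrightarrow> rot m x \<in> {1..2*m}"
  by (auto simp: rot_def)

lemma rot_rot: "x \<in> {1..2*m} \<Longrightarrow> rot m (rot m x) = x"
  by (auto simp: rot_def)

lemma inj_on_rot: "inj_on (rot m) {1..2*m}"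
  by (metis inj_on_def rot_rot)

lemma rot_image_rot_image: "B \<subseteq> {1..2*m} \<Longrightarrow> rot m ` rot m ` B = B"
  by (force simp: image_image rot_rot intro: image_eqI)

lemma fold_pt_rot: "x \<in> {1..2*m} \<Longrightarrow> fold_pt m (rot m x) = fold_pt m x"
  by (auto simp: rot_def fold_pt_def)

lemma fold_pt_image_rot_image: "B \<subseteq> {1..2*m} \<Longrightarrow> fold_pt m ` rot m ` B = fold_pt m ` B"
  by (force simp: image_image fold_pt_rot intro: image_eqI)

lemma fold_pt_in_range: "x \<in> {1..2*m} \<Longrightarrow> fold_pt m x \<in> {1..m}"
  by (auto simp: fold_pt_def)

lemma fold_pt_eq_cases:
  "x \<in> {1..2*m} \<Longrightarrow> y \<in> {1..2*m} \<Longrightarrow> fold_pt m x = fold_pt m y \<Longrightarrow> y = x \<or> y = rot m x"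
  by (auto simp: fold_pt_def rot_def split: if_splits)

lemma fold_pt_window_pt: "x \<in> {1..m} \<Longrightarrow> 1 \<le> z \<Longrightarrow> fold_pt m (window_pt m z x) = x"
  by (auto simp: fold_pt_def window_pt_def)

lemma window_pt_fold_pt:
  "x \<in> {1..2*m} \<Longrightarrow> 1 \<le> z \<Longrightarrow> z \<le> m \<Longrightarrow>
   window_pt m z (fold_pt m x) = (if z \<le> x \<and> x < z + m then x else rot m x)"
  by (auto simp: fold_pt_def window_pt_def rot_def)

lemma window_pt_bounds:
  "x \<in> {1..m} \<Longrightarrow> 1 \<le> z \<Longrightarrow> z \<le> m \<Longrightarrow> z \<le> window_pt m z x \<and> window_pt m z x < z + m"
  by (auto simp: window_pt_def)

lemma inj_on_window_pt: "inj_on (window_pt m z) {1..m}"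
  by (auto simp: inj_on_def window_pt_def split: if_splits)

lemma rot_inside_window_iff:
  "y \<in> {1..2*m} \<Longrightarrow> y \<noteq> z \<Longrightarrow> y \<noteq> z + m \<Longrightarrow> 1 \<le> z \<Longrightarrow> z \<le> m \<Longrightarrow>
   (z < rot m y \<and> rot m y < z + m) \<longleftrightarrow> \<not> (z < y \<and> y < z + m)"
  by (auto simp: rot_def)

lemma crosses_rot_image:
  assumes "X \<subseteq> {1..2*m}" "Y \<subseteq> {1..2*m}" "crosses X Y"
  shows "crosses (rot m ` X) (rot m ` Y) \<or> crosses (rot m ` Y) (rot m ` X)"
  by (rule crosses_image_rotation[where D="{1..2*m}" and t="m+1"]) (use assms in \<open>auto simp: rot_def\<close>)

lemma fold_part_mono:
  assumes "refines P P'"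
  shows "refines (fold_part m P) (fold_part m P')"
  unfolding refines_def
proof
  fix C assume "C \<in> fold_part m P'"
  then obtain G where G: "G \<in> P'" "C = fold_pt m ` G" unfolding fold_part_def by blast
  then obtain S where S: "S \<subseteq> P" "G = \<Union>S" using assms unfolding refines_def by blast
  have "C = \<Union>(image (fold_pt m) ` S)" using G S by blast
  moreover have "image (fold_pt m) ` S \<subseteq> fold_part m P" using S unfolding fold_part_def by blast
  ultimately show "\<exists>S\<subseteq>fold_part m P. C = \<Union>S" by blast
qed

section \<open>Symmetric noncrossing partitions\<close>

locale sym_nc_partition =
  fixes m :: nat and P :: "nat set set"
  assumes partition: "partition_on {1..2*m} P"
    and nc: "noncrossing P"
    and rot_closed: "B \<in> P \<Longrightarrow> rot m ` B \<in> P"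
begin

lemma block_subset: "B \<in> P \<Longrightarrow> B \<subseteq> {1..2*m}"
  using partition_on_block_subset[OF partition] .

lemma block_nonempty: "B \<in> P \<Longrightarrow> B \<noteq> {}"
  using partition_on_block_nonempty[OF partition] .

lemma block_eq: "B \<in> P \<Longrightarrow> B' \<in> P \<Longrightarrow> x \<in> B \<Longrightarrow> x \<in> B' \<Longrightarrow> B = B'"
  using partition_on_block_eq[OF partition] .

lemma not_crosses: "B \<in> P \<Longrightarrow> B' \<in> P \<Longrightarrow> B \<noteq> B' \<Longrightarrow> \<not> crosses B B'"
  using nc unfolding noncrossing_iff_not_crosses by blast

lemma central_block_antipodal:
  assumes "Z \<in> P" "rot m ` Z = Z"
  obtains z where "z \<in> Z" "1 \<le> z" "z \<le> m" "z + m \<in> Z"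
proof -
  obtain x where x: "x \<in> Z" using block_nonempty assms(1) by blast
  have "x \<in> {1..2*m}" using block_subset assms(1) x by blast
  moreover have "rot m x \<in> Z" using assms(2) x by blast
  ultimately show thesis using that x by (cases "x \<le> m") (auto simp: rot_def)
qed

lemma same_side_of_diameter:
  assumes Z: "Z \<in> P" "z \<in> Z" "z + m \<in> Z" and B: "B \<in> P" "B \<noteq> Z" "x \<in> B" "y \<in> B"
  shows "(z < x \<and> x < z + m) \<longleftrightarrow> (z < y \<and> y < z + m)"
proof -
  have off_diameter: "w \<noteq> z \<and> w \<noteq> z + m" if "w \<in> B" for w
    using block_eq[OF B(1) Z(1) that] Z B(2) by blast
  have "z < w \<and> w < z + m" if "w \<in> B" "w' \<in> B" "z < w'" "w' < z + m" for w w'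
  proof (rule ccontr)
    assume "\<not> (z < w \<and> w < z + m)"
    then have "w < z \<or> z + m < w" using off_diameter[OF that(1)] by auto
    then have "crosses B Z \<or> crosses Z B" unfolding crosses_def using that Z by blast
    then show False using not_crosses Z(1) B(1,2) by blast
  qed
  then show ?thesis using B(3,4) by blast
qed

lemma central_block_unique:
  assumes "Z1 \<in> P" "Z2 \<in> P" "rot m ` Z1 = Z1" "rot m ` Z2 = Z2"
  shows "Z1 = Z2"
proof (rule ccontr)
  assume ne: "Z1 \<noteq> Z2"
  obtain z where z: "z \<in> Z1" "1 \<le> z" "z \<le> m" "z + m \<in> Z1"
    using central_block_antipodal assms(1,3) by blast
  obtain w where w: "w \<in> Z2" "1 \<le> w" "w \<le> m" "w + m \<in> Z2"
    using central_block_antipodal assms(2,4) by blast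
  have "(z < w \<and> w < z + m) \<longleftrightarrow> (z < w + m \<and> w + m < z + m)"
    using same_side_of_diameter[OF assms(1) z(1,4) assms(2) ne[symmetric] w(1,4)] .
  then have "w = z" using z w by auto
  then show False using ne z w block_eq assms(1,2) by blast
qed

lemma fold_pt_mem_fold_block:
  assumes "G \<in> P" "x \<in> {1..2*m}" "fold_pt m x \<in> fold_pt m ` G"
  shows "x \<in> G \<or> x \<in> rot m ` G"
proof -
  obtain y where y: "y \<in> G" "fold_pt m x = fold_pt m y" using assms(3) by blast
  have "y \<in> {1..2*m}" using block_subset assms(1) y(1) by blast
  then have "x = y \<or> x = rot m y" using fold_pt_eq_cases assms(2) y(2) by metis
  then show ?thesis using y by blast
qed

lemma partition_fold_part: "partition_on {1..m} (fold_part m P)"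
proof (rule partition_onI)
  have "\<Union>(fold_part m P) = fold_pt m ` {1..2*m}"
    using partition_onD1[OF partition] unfolding fold_part_def by blast
  also have "\<dots> = {1..m}"
    using fold_pt_in_range by (force simp: fold_pt_def intro: image_eqI)
  finally show "\<Union>(fold_part m P) = {1..m}" .
next
  fix p q assume p: "p \<in> fold_part m P" and q: "q \<in> fold_part m P" and pq: "p \<noteq> q"
  obtain B where B: "B \<in> P" "p = fold_pt m ` B" using p unfolding fold_part_def by blast
  obtain B' where B': "B' \<in> P" "q = fold_pt m ` B'" using q unfolding fold_part_def by blast
  show "disjnt p q" unfolding disjnt_def
  proof (rule ccontr)
    assume "p \<inter> q \<noteq> {}"
    then obtain y where y: "y \<in> p" "y \<in> q" by blast
    then obtain a where a: "a \<in> B'" "y = fold_pt m a" using B'(2) by blast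
    then have a: "a \<in> B'" "fold_pt m a \<in> fold_pt m ` B" using y(1) B(2) by simp_all
    have "a \<in> {1..2*m}" using block_subset B'(1) a(1) by blast
    then have "a \<in> B \<or> a \<in> rot m ` B" using fold_pt_mem_fold_block B(1) a(2) by blast
    then have "B' = B \<or> B' = rot m ` B" using block_eq rot_closed B(1) B'(1) a(1) by blast
    then have "q = p" using B B' fold_pt_image_rot_image block_subset by metis
    then show False using pq by blast
  qed
next
  show "{} \<notin> fold_part m P" using block_nonempty unfolding fold_part_def by blast
qed

lemma card_fold_noncentral:
  assumes "B \<in> P" "rot m ` B \<noteq> B"
  shows "card (fold_pt m ` B) = card B"
proof -
  have "inj_on (fold_pt m) B"
  proof (rule inj_onI)
    fix a b assume ab: "a \<in> B" "b \<in> B" "fold_pt m a = fold_pt m b"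
    have "a \<in> {1..2*m}" "b \<in> {1..2*m}" using block_subset assms(1) ab by blast+
    then have "b = a \<or> b = rot m a" using fold_pt_eq_cases ab(3) by blast
    moreover have "b \<noteq> rot m a"
    proof
      assume "b = rot m a"
      then have "rot m ` B = B" using block_eq[OF rot_closed[OF assms(1)] assms(1)] ab by blast
      then show False using assms(2) by blast
    qed
    ultimately show "a = b" by blast
  qed
  then show ?thesis by (simp add: card_image)
qed

text \<open>Unless B is the central block, G is whichever of B and rot B lies in the window {z..<z+m}.\<close>
lemma window_image_fold_block:
  assumes Z: "Z \<in> P" "rot m ` Z = Z" and z: "z \<in> Z" "1 \<le> z" "z \<le> m" "z + m \<in> Z"
    and B: "B \<in> P"
  obtains G where "G \<in> P" "window_pt m z ` fold_pt m ` B \<subseteq> G" "fold_pt m ` G = fold_pt m ` B"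
proof -
  have unfold: "window_pt m z (fold_pt m x) = (if z \<le> x \<and> x < z + m then x else rot m x)"
    if "x \<in> B" for x
    by (rule window_pt_fold_pt[OF _ z(2,3)]) (use block_subset[OF B] that in blast)
  obtain x0 where x0: "x0 \<in> B" using block_nonempty[OF B] by blast
  consider "B = Z" | "B \<noteq> Z" "z < x0 \<and> x0 < z + m" | "B \<noteq> Z" "\<not> (z < x0 \<and> x0 < z + m)"
    by blast
  then show thesis
  proof cases
    case 1
    have "rot m x \<in> Z" if "x \<in> Z" for x using Z(2) that by blast
    then have "window_pt m z ` fold_pt m ` B \<subseteq> Z" using unfold 1 by auto
    then show thesis using 1 Z(1) that by simp
  next
    case 2
    have "window_pt m z (fold_pt m x) = x" if "x \<in> B" for x
      using same_side_of_diameter[OF Z(1) z(1,4) B 2(1) x0 that] 2(2) unfold[OF that] by simp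
    then have "window_pt m z ` fold_pt m ` B \<subseteq> B" by auto
    then show thesis by (rule that[OF B _ refl])
  next
    case 3
    have "window_pt m z (fold_pt m x) = rot m x" if "x \<in> B" for x
    proof -
      have "x \<noteq> z" using block_eq[OF B Z(1) that] z(1) 3(1) by blast
      then show ?thesis
        using same_side_of_diameter[OF Z(1) z(1,4) B 3(1) x0 that] 3(2) unfold[OF that] by auto
    qed
    then have "window_pt m z ` fold_pt m ` B \<subseteq> rot m ` B" by auto
    moreover have "fold_pt m ` rot m ` B = fold_pt m ` B"
      using fold_pt_image_rot_image block_subset B by blast
    ultimately show thesis by (intro that[OF rot_closed[OF B]])
  qed
qed

lemma noncrossing_fold_part:
  assumes Z: "Z \<in> P" "rot m ` Z = Z"
  shows "noncrossing (fold_part m P)"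
  unfolding noncrossing_iff_not_crosses
proof (intro ballI impI notI)
  obtain z where z: "z \<in> Z" "1 \<le> z" "z \<le> m" "z + m \<in> Z"
    using central_block_antipodal Z by blast
  fix p q assume p: "p \<in> fold_part m P" and q: "q \<in> fold_part m P" and pq: "p \<noteq> q"
    and c: "crosses p q"
  obtain B1 where B1: "B1 \<in> P" "p = fold_pt m ` B1" using p unfolding fold_part_def by blast
  obtain B2 where B2: "B2 \<in> P" "q = fold_pt m ` B2" using q unfolding fold_part_def by blast
  obtain G1 where G1: "G1 \<in> P" "window_pt m z ` p \<subseteq> G1" "fold_pt m ` G1 = p"
    using window_image_fold_block[OF Z z B1(1)] B1(2) by metis
  obtain G2 where G2: "G2 \<in> P" "window_pt m z ` q \<subseteq> G2" "fold_pt m ` G2 = q"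
    using window_image_fold_block[OF Z z B2(1)] B2(2) by metis
  have sub: "p \<subseteq> {1..m}" "q \<subseteq> {1..m}"
    using partition_on_block_subset[OF partition_fold_part] p q by blast+
  have mono: "window_pt m z x < window_pt m z y" if "x < y" "y < z \<or> z \<le> x" for x y
    using that by (auto simp: window_pt_def)
  have jump: "window_pt m z y < window_pt m z x"
    if "x \<in> {1..m}" "y \<in> {1..m}" "x < z" "z \<le> y" for x y
    using that by (auto simp: window_pt_def)
  have "crosses (window_pt m z ` p) (window_pt m z ` q) \<or>
      crosses (window_pt m z ` q) (window_pt m z ` p)"
    by (rule crosses_image_rotation[where t=z, OF _ _ _ sub c]) (use mono jump in auto)
  then have "crosses G1 G2 \<or> crosses G2 G1" using crosses_mono G1(2) G2(2) by blast
  moreover have "G1 \<noteq> G2" using G1 G2 pq by blast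
  ultimately show False using not_crosses G1(1) G2(1) by blast
qed

lemma block_subset_if_covered_up_to_rot:
  assumes P': "sym_nc_partition m P'"
    and Z: "Z \<in> P" "z \<in> Z" "z + m \<in> Z" "1 \<le> z" "z \<le> m" and Z': "Z' \<in> P'" "z \<in> Z'" "z + m \<in> Z'"
    and B: "B \<in> P" "B \<noteq> Z" "x0 \<in> B" and H: "H \<in> P'" "H \<noteq> Z'" "x0 \<in> H"
    and cover: "B \<subseteq> H \<union> rot m ` H"
  shows "B \<subseteq> H"
proof
  interpret P': sym_nc_partition m P' by fact
  fix y assume y: "y \<in> B"
  show "y \<in> H"
  proof (rule ccontr)
    assume "y \<notin> H"
    then have "y \<in> rot m ` H" using cover y by blast
    then have ry: "rot m y \<in> H" using rot_image_rot_image[OF P'.block_subset[OF H(1)]] by blast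
    have y_range: "y \<in> {1..2*m}" using block_subset B(1) y by blast
    have y_off: "y \<noteq> z" "y \<noteq> z + m" using block_eq[OF B(1) Z(1) y] Z(2,3) B(2) by blast+
    have "(z < x0 \<and> x0 < z + m) \<longleftrightarrow> (z < y \<and> y < z + m)"
      using same_side_of_diameter[OF Z(1-3) B(1,2,3) y] .
    moreover have "(z < x0 \<and> x0 < z + m) \<longleftrightarrow> (z < rot m y \<and> rot m y < z + m)"
      using P'.same_side_of_diameter[OF Z' H ry] .
    ultimately show False using rot_inside_window_iff[OF y_range y_off Z(4,5)] by blast
  qed
qed

lemma noncentral_block_refines:
  assumes P': "sym_nc_partition m P'"
    and r: "Disjoint_Sets.refines {1..m} (fold_part m P) (fold_part m P')"
    and Z: "Z \<in> P" "z \<in> Z" "z + m \<in> Z" "1 \<le> z" "z \<le> m"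
    and Z': "Z' \<in> P'" "rot m ` Z' = Z'" "z \<in> Z'" "z + m \<in> Z'"
    and B: "B \<in> P" "B \<noteq> Z"
  shows "\<exists>H\<in>P'. B \<subseteq> H"
proof -
  interpret P': sym_nc_partition m P' by fact
  have "fold_pt m ` B \<in> fold_part m P" using B(1) unfolding fold_part_def by blast
  then obtain C where "C \<in> fold_part m P'" "fold_pt m ` B \<subseteq> C"
    using r unfolding Disjoint_Sets.refines_def by blast
  then obtain G where G: "G \<in> P'" "fold_pt m ` B \<subseteq> fold_pt m ` G"
    unfolding fold_part_def by blast
  have cover: "B \<subseteq> G \<union> rot m ` G"
  proof
    fix y assume y: "y \<in> B"
    have "y \<in> {1..2*m}" using block_subset[OF B(1)] y by blast
    moreover have "fold_pt m y \<in> fold_pt m ` G" using G(2) y by blast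
    ultimately show "y \<in> G \<union> rot m ` G" using P'.fold_pt_mem_fold_block[OF G(1)] by blast
  qed
  show ?thesis
  proof (cases "G = Z'")
    case True
    then have "B \<subseteq> Z'" using cover Z'(2) by simp
    then show ?thesis using Z'(1) by blast
  next
    case False
    have rrG: "rot m ` rot m ` G = G" using rot_image_rot_image P'.block_subset[OF G(1)] by blast
    obtain x0 where x0: "x0 \<in> B" using block_nonempty[OF B(1)] by blast
    then obtain H where H: "H \<in> {G, rot m ` G}" "x0 \<in> H" using cover by blast
    have "H \<in> P'" using H(1) G(1) P'.rot_closed[OF G(1)] by blast
    moreover have "H \<noteq> Z'" using H(1) False rrG Z'(2) by auto
    moreover have "B \<subseteq> H \<union> rot m ` H" using cover H(1) rrG by auto
    ultimately show ?thesis
      using block_subset_if_covered_up_to_rot[OF P' Z Z'(1,3,4) B x0 _ _ H(2)] by blast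
  qed
qed

end

locale sym_nc_dvd = sym_nc_partition +
  fixes d :: nat
  assumes dvd_card_block: "B \<in> P \<Longrightarrow> d dvd card B"
    and not_dvd: "\<not> d dvd m"
begin

lemma finite_fold_part: "finite (fold_part m P)" "\<forall>C\<in>fold_part m P. finite C"
  using partition_on_finite_blocks[OF partition_fold_part] by simp_all

lemma central_block_exists:
  obtains Z where "Z \<in> P" "rot m ` Z = Z"
proof -
  have "\<exists>Z\<in>P. rot m ` Z = Z"
  proof (rule ccontr)
    assume "\<not> ?thesis"
    then have "\<forall>C\<in>fold_part m P. d dvd card C"
      using card_fold_noncentral dvd_card_block unfolding fold_part_def by auto
    then have "d dvd card (\<Union>(fold_part m P))"
      using dvd_card_Union finite_fold_part partition_onD2[OF partition_fold_part] by blast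
    then show False using partition_onD1[OF partition_fold_part, symmetric] not_dvd by simp
  qed
  then show thesis using that by blast
qed

lemma dvd_card_fold_block:
  assumes Z: "Z \<in> P" "rot m ` Z = Z" and C: "C \<in> fold_part m P" "C \<noteq> fold_pt m ` Z"
  shows "d dvd card C"
proof -
  obtain B where B: "B \<in> P" "C = fold_pt m ` B" using C(1) unfolding fold_part_def by blast
  have "rot m ` B \<noteq> B" using central_block_unique[OF B(1) Z(1) _ Z(2)] B C(2) by blast
  then show ?thesis using card_fold_noncentral[OF B(1)] B dvd_card_block by simp
qed

lemma card_Union_fold_blocks_mod:
  assumes Z: "Z \<in> P" "rot m ` Z = Z" and S: "S \<subseteq> fold_part m P" "fold_pt m ` Z \<in> S"
  shows "card (\<Union>S) mod d = m mod d"
proof -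
  have central_residue: "card (\<Union>S') mod d = card (fold_pt m ` Z) mod d"
    if S': "S' \<subseteq> fold_part m P" "fold_pt m ` Z \<in> S'" for S'
  proof (rule card_Union_mod_eq_block)
    show "finite S'" using finite_subset[OF S'(1) finite_fold_part(1)] .
    show "\<forall>C\<in>S'. finite C" using S'(1) finite_fold_part(2) by blast
    show "disjoint S'" using pairwise_subset[OF partition_onD2[OF partition_fold_part] S'(1)] .
    show "\<forall>C\<in>S'. C \<noteq> fold_pt m ` Z \<longrightarrow> d dvd card C"
      using S'(1) dvd_card_fold_block[OF Z] by blast
  qed (fact S'(2))
  have "fold_pt m ` Z \<in> fold_part m P" using Z(1) unfolding fold_part_def by blast
  then have "card (\<Union>(fold_part m P)) mod d = card (fold_pt m ` Z) mod d"
    using central_residue by blast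
  then show ?thesis
    using central_residue[OF S] partition_onD1[OF partition_fold_part, symmetric] by simp
qed

lemma central_iff_not_dvd_card_fold:
  assumes B: "B \<in> P"
  shows "rot m ` B = B \<longleftrightarrow> \<not> d dvd card (fold_pt m ` B)"
proof
  assume central: "rot m ` B = B"
  have "{fold_pt m ` B} \<subseteq> fold_part m P" using B unfolding fold_part_def by blast
  then have "card (fold_pt m ` B) mod d = m mod d"
    using card_Union_fold_blocks_mod[OF B central, of "{fold_pt m ` B}"] by simp
  then show "\<not> d dvd card (fold_pt m ` B)" using not_dvd by (auto simp: dvd_eq_mod_eq_0)
next
  assume "\<not> d dvd card (fold_pt m ` B)"
  then show "rot m ` B = B" using card_fold_noncentral[OF B] dvd_card_block[OF B] by fastforce
qed

lemma exceptional_block_fold_part: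
  "\<exists>E\<in>fold_part m P. \<forall>C\<in>fold_part m P. C \<noteq> E \<longrightarrow> d dvd card C"
proof -
  obtain Z where Z: "Z \<in> P" "rot m ` Z = Z" by (rule central_block_exists)
  then have "fold_pt m ` Z \<in> fold_part m P" unfolding fold_part_def by blast
  then show ?thesis using dvd_card_fold_block[OF Z] by blast
qed

lemma fold_part_in_NC_r:
  assumes "d * n + r = m"
  shows "fold_part m P \<in> NC_r d n r"
proof -
  obtain Z where "Z \<in> P" "rot m ` Z = Z" by (rule central_block_exists)
  then show ?thesis
    unfolding NC_r_def assms
    using partition_fold_part noncrossing_fold_part exceptional_block_fold_part by blast
qed

lemma central_subset_central:
  assumes P': "sym_nc_dvd m P' d" and r: "Disjoint_Sets.refines {1..m} (fold_part m P) (fold_part m P')"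
    and Z: "Z \<in> P" "rot m ` Z = Z" and Z': "Z' \<in> P'" "rot m ` Z' = Z'"
  shows "Z \<subseteq> Z'"
proof -
  interpret P': sym_nc_dvd m P' d by fact
  have "fold_pt m ` Z \<in> fold_part m P" using Z(1) unfolding fold_part_def by blast
  then obtain C where C: "C \<in> fold_part m P'" "fold_pt m ` Z \<subseteq> C"
    using r unfolding Disjoint_Sets.refines_def by blast
  obtain G where G: "G \<in> P'" "C = fold_pt m ` G" using C(1) unfolding fold_part_def by blast
  define S where "S = {p \<in> fold_part m P. p \<subseteq> C}"
  have S: "S \<subseteq> fold_part m P" "fold_pt m ` Z \<in> S"
    unfolding S_def using \<open>fold_pt m ` Z \<in> fold_part m P\<close> C(2) by auto
  have "C = \<Union>S" unfolding S_def using partition_onD1[OF refines_obtains_subset[OF r C(1)]] .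
  then have "card C mod d = m mod d" using card_Union_fold_blocks_mod[OF Z S] by simp
  then have "\<not> d dvd card (fold_pt m ` G)" using G(2) not_dvd by (auto simp: dvd_eq_mod_eq_0)
  then have "rot m ` G = G" using P'.central_iff_not_dvd_card_fold[OF G(1)] by blast
  then have "G = Z'" using P'.central_block_unique[OF G(1) Z'(1) _ Z'(2)] by blast
  show ?thesis
  proof
    fix x assume "x \<in> Z"
    then have "x \<in> {1..2*m}" using block_subset Z(1) by blast
    moreover have "fold_pt m x \<in> fold_pt m ` G" using \<open>x \<in> Z\<close> C(2) unfolding G(2) by blast
    ultimately show "x \<in> Z'" using P'.fold_pt_mem_fold_block[OF G(1)] \<open>G = Z'\<close> Z'(2) by blast
  qed
qed

lemma fold_part_reflects_refines:
  assumes P': "sym_nc_dvd m P' d" and r: "refines (fold_part m P) (fold_part m P')"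
  shows "refines P P'"
proof -
  interpret P': sym_nc_dvd m P' d by fact
  have r': "Disjoint_Sets.refines {1..m} (fold_part m P) (fold_part m P')"
    using r refines_iff_partition_refines[OF partition_fold_part P'.partition_fold_part] by blast
  obtain Z where Z: "Z \<in> P" "rot m ` Z = Z" by (rule central_block_exists)
  obtain Z' where Z': "Z' \<in> P'" "rot m ` Z' = Z'" by (rule P'.central_block_exists)
  have ZZ': "Z \<subseteq> Z'" by (rule central_subset_central[OF P' r' Z Z'])
  obtain z where z: "z \<in> Z" "1 \<le> z" "z \<le> m" "z + m \<in> Z" using central_block_antipodal[OF Z] .
  have "\<exists>H\<in>P'. B \<subseteq> H" if "B \<in> P" for B
    using ZZ' Z'(1) noncentral_block_refines[OF P'.sym_nc_partition_axioms r' Z(1) z(1,4,2,3)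
        Z' z(1,4)[THEN subsetD[OF ZZ']] that] by (cases "B = Z") blast+
  then have "Disjoint_Sets.refines {1..2*m} P P'"
    unfolding Disjoint_Sets.refines_def using partition P'.partition by blast
  then show ?thesis using refines_iff_partition_refines[OF partition P'.partition] by blast
qed

end

section \<open>Unfolding\<close>

locale pointed_nc_partition =
  fixes m :: nat and Q :: "nat set set" and E :: "nat set"
  assumes partition: "partition_on {1..m} Q"
    and nc: "noncrossing Q"
    and E: "E \<in> Q"
begin

definition base :: nat where "base = Min E"

definition lift :: "nat set \<Rightarrow> nat set" where "lift C = window_pt m base ` C"

definition center :: "nat set" where "center = E \<union> rot m ` E"

definition unfold_part :: "nat set set" where
  "unfold_part = insert center (lift ` (Q - {E}) \<union> (\<lambda>C. rot m ` lift C) ` (Q - {E}))"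

lemma block_subset: "C \<in> Q \<Longrightarrow> C \<subseteq> {1..m}"
  using partition_on_block_subset[OF partition] .

lemma block_eq: "C \<in> Q \<Longrightarrow> C' \<in> Q \<Longrightarrow> x \<in> C \<Longrightarrow> x \<in> C' \<Longrightarrow> C = C'"
  using partition_on_block_eq[OF partition] .

lemma not_crosses: "C \<in> Q \<Longrightarrow> C' \<in> Q \<Longrightarrow> C \<noteq> C' \<Longrightarrow> \<not> crosses C C'"
  using nc unfolding noncrossing_iff_not_crosses by blast

lemma base_mem: "base \<in> E"
  unfolding base_def
  using partition_on_block_nonempty[OF partition E] finite_subset[OF block_subset[OF E]]
  by (intro Min_in) auto

lemma base_bounds: "1 \<le> base" "base \<le> m"
  using base_mem block_subset[OF E] by auto

lemma lift_subset_window: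
  assumes "C \<in> Q"
  shows "lift C \<subseteq> {base..<base + m}"
proof
  fix y assume "y \<in> lift C"
  then obtain x where "x \<in> C" "y = window_pt m base x" unfolding lift_def by blast
  then show "y \<in> {base..<base + m}"
    using window_pt_bounds[OF _ base_bounds] block_subset[OF assms] by auto
qed

lemma lift_subset: "C \<in> Q \<Longrightarrow> lift C \<subseteq> {1..2*m}"
  using lift_subset_window base_bounds by (force simp: subset_eq)

lemma lift_inside:
  assumes C: "C \<in> Q" "C \<noteq> E" and y: "y \<in> lift C"
  shows "base < y \<and> y < base + m"
proof -
  obtain x where x: "x \<in> C" "y = window_pt m base x" using y unfolding lift_def by blast
  have "y \<noteq> base"
  proof
    assume "y = base"
    then have "x = base" using x block_subset[OF C(1)] base_bounds
      by (auto simp: window_pt_def split: if_splits)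
    then show False using block_eq[OF C(1) E x(1)] base_mem C(2) by blast
  qed
  then show ?thesis using lift_subset_window[OF C(1)] y by auto
qed

lemma rot_lift_outside:
  assumes "C \<in> Q" "C \<noteq> E" "y \<in> rot m ` lift C"
  shows "y < base \<or> base + m < y"
proof -
  obtain w where w: "w \<in> lift C" "y = rot m w" using assms(3) by blast
  show ?thesis using lift_inside[OF assms(1,2) w(1)] w(2) by (auto simp: rot_def)
qed

lemma fold_pt_image_lift:
  assumes "C \<in> Q"
  shows "fold_pt m ` lift C = C"
proof -
  have "fold_pt m ` lift C = (\<lambda>x. x) ` C"
    unfolding lift_def image_image
    by (rule image_cong) (use block_subset[OF assms] fold_pt_window_pt base_bounds in auto)
  then show ?thesis by simp
qed

lemma fold_pt_image_rot_lift: "C \<in> Q \<Longrightarrow> fold_pt m ` rot m ` lift C = C"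
  using fold_pt_image_rot_image[OF lift_subset] fold_pt_image_lift by simp

lemma E_subset: "E \<subseteq> {1..2*m}"
  using block_subset[OF E] by auto

lemma center_subset: "center \<subseteq> {1..2*m}"
  unfolding center_def using E_subset rot_in_range by blast

lemma fold_pt_image_center: "fold_pt m ` center = E"
proof -
  have "fold_pt m ` E = E" using block_subset[OF E] by (force simp: fold_pt_def)
  then show ?thesis
    unfolding center_def image_Un fold_pt_image_rot_image[OF E_subset] by simp
qed

lemma rot_center: "rot m ` center = center"
  unfolding center_def image_Un
  using rot_image_rot_image[OF E_subset] by auto

lemma rot_rot_lift: "C \<in> Q \<Longrightarrow> rot m ` rot m ` lift C = lift C"
  using rot_image_rot_image[OF lift_subset] .

lemma card_lift: "C \<in> Q \<Longrightarrow> card (lift C) = card C"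
  unfolding lift_def using card_image inj_on_subset[OF inj_on_window_pt block_subset] by blast

lemma card_rot_lift: "C \<in> Q \<Longrightarrow> card (rot m ` lift C) = card C"
  using card_image[OF inj_on_subset[OF inj_on_rot lift_subset]] card_lift by metis

lemma card_center: "card center = 2 * card E"
proof -
  have "E \<inter> rot m ` E = {}"
  proof (rule ccontr)
    assume "E \<inter> rot m ` E \<noteq> {}"
    then obtain x y where xy: "x \<in> E" "y \<in> E" "x = rot m y" by blast
    moreover have "x \<in> {1..m}" "y \<in> {1..m}" using xy(1,2) block_subset[OF E] by blast+
    ultimately show False by (auto simp: rot_def)
  qed
  moreover have "finite E" using finite_subset[OF block_subset[OF E]] by simp
  moreover have "card (rot m ` E) = card E"
    using card_image[OF inj_on_subset[OF inj_on_rot E_subset]] .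
  ultimately show ?thesis unfolding center_def by (simp add: card_Un_disjoint)
qed

lemma unfold_part_cases:
  assumes "X \<in> unfold_part"
  obtains "X = center"
    | C where "C \<in> Q" "C \<noteq> E" "X = lift C"
    | C where "C \<in> Q" "C \<noteq> E" "X = rot m ` lift C"
  using assms unfolding unfold_part_def by blast

lemma unfold_part_block_subset: "X \<in> unfold_part \<Longrightarrow> X \<subseteq> {1..2*m}"
proof (erule unfold_part_cases)
  fix C assume "C \<in> Q" "X = rot m ` lift C"
  then show "X \<subseteq> {1..2*m}" using lift_subset rot_in_range by blast
qed (use center_subset lift_subset in blast)+

lemma fold_pt_image_unfold_block: "X \<in> unfold_part \<Longrightarrow> fold_pt m ` X \<in> Q"
  by (erule unfold_part_cases) (simp_all add: fold_pt_image_center E fold_pt_image_lift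
      fold_pt_image_rot_lift)

lemma fold_part_unfold_part: "fold_part m unfold_part = Q"
proof
  show "fold_part m unfold_part \<subseteq> Q"
    using fold_pt_image_unfold_block unfolding fold_part_def by blast
  show "Q \<subseteq> fold_part m unfold_part"
  proof
    fix C assume C: "C \<in> Q"
    have "center \<in> unfold_part" "C \<noteq> E \<Longrightarrow> lift C \<in> unfold_part"
      unfolding unfold_part_def using C by blast+
    then have "fold_pt m ` center \<in> fold_part m unfold_part"
      "C \<noteq> E \<Longrightarrow> fold_pt m ` lift C \<in> fold_part m unfold_part"
      unfolding fold_part_def by blast+
    then show "C \<in> fold_part m unfold_part"
      using fold_pt_image_center fold_pt_image_lift[OF C] by (cases "C = E") simp_all
  qed
qed

lemma unfold_block_determined:
  assumes "X \<in> unfold_part" "x \<in> X"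
  shows "X = (if fold_pt m ` X = E then center
              else if base < x \<and> x < base + m then lift (fold_pt m ` X)
              else rot m ` lift (fold_pt m ` X))"
  using assms(1)
proof (cases rule: unfold_part_cases)
  case 1
  then show ?thesis using fold_pt_image_center by simp
next
  case (2 C)
  then show ?thesis using lift_inside[OF 2(1,2)] assms(2) fold_pt_image_lift by simp
next
  case (3 C)
  have "\<not> (base < x \<and> x < base + m)" using rot_lift_outside[OF 3(1,2)] assms(2) 3(3) by force
  then show ?thesis using 3 fold_pt_image_rot_lift[OF 3(1)] by auto
qed

lemma unfold_block_eq:
  assumes X: "X \<in> unfold_part" and Y: "Y \<in> unfold_part" and x: "x \<in> X" "x \<in> Y"
  shows "X = Y"
proof -
  have "fold_pt m ` X = fold_pt m ` Y"
    using block_eq[OF fold_pt_image_unfold_block[OF X] fold_pt_image_unfold_block[OF Y]] x by blast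
  then show ?thesis
    using unfold_block_determined[OF X x(1)] unfold_block_determined[OF Y x(2)] by presburger
qed

lemma unfold_part_covers: "\<Union>unfold_part = {1..2*m}"
proof
  show "\<Union>unfold_part \<subseteq> {1..2*m}" using unfold_part_block_subset by blast
next
  show "{1..2*m} \<subseteq> \<Union>unfold_part"
  proof
    fix x assume x: "x \<in> {1..2*m}"
    obtain C where C: "C \<in> Q" "fold_pt m x \<in> C"
      using partition_on_covers[OF partition fold_pt_in_range[OF x]] by blast
    have unfold_x: "window_pt m base (fold_pt m x) = (if base \<le> x \<and> x < base + m then x else rot m x)"
      using window_pt_fold_pt[OF x base_bounds] .
    have "window_pt m base (fold_pt m x) \<in> lift C" unfolding lift_def using C(2) by blast
    then have "x \<in> lift C \<union> rot m ` lift C"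
      using unfold_x rot_rot[OF x] by (cases "base \<le> x \<and> x < base + m") (auto intro: rev_image_eqI)
    moreover have "x \<in> center" if "C = E"
    proof (cases "x \<le> m")
      case True
      then show ?thesis using C that by (simp add: center_def fold_pt_def)
    next
      case False
      then have "rot m x \<in> E" using C that by (simp add: fold_pt_def rot_def)
      then show ?thesis unfolding center_def using rot_rot[OF x] by (metis UnI2 imageI)
    qed
    moreover have "center \<in> unfold_part" "C \<noteq> E \<Longrightarrow> lift C \<in> unfold_part"
      "C \<noteq> E \<Longrightarrow> rot m ` lift C \<in> unfold_part"
      unfolding unfold_part_def using C(1) by blast+
    ultimately show "x \<in> \<Union>unfold_part" by (cases "C = E") blast+
  qed
qed

lemma partition_unfold_part: "partition_on {1..2*m} unfold_part"
proof (rule partition_onI)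
  show "\<Union>unfold_part = {1..2*m}" by (rule unfold_part_covers)
next
  fix p q assume "p \<in> unfold_part" "q \<in> unfold_part" "p \<noteq> q"
  then show "disjnt p q" unfolding disjnt_def using unfold_block_eq by blast
next
  have "center \<noteq> {}" unfolding center_def using base_mem by blast
  moreover have "lift C \<noteq> {}" "rot m ` lift C \<noteq> {}" if "C \<in> Q" for C
    unfolding lift_def using partition_on_block_nonempty[OF partition that] by simp_all
  ultimately show "{} \<notin> unfold_part" unfolding unfold_part_def by auto
qed

lemma rot_closed_unfold_part: "X \<in> unfold_part \<Longrightarrow> rot m ` X \<in> unfold_part"
  by (erule unfold_part_cases) (auto simp: unfold_part_def rot_center rot_rot_lift)

lemma dvd_card_unfold_part:
  assumes dvd: "\<And>C. C \<in> Q \<Longrightarrow> C \<noteq> E \<Longrightarrow> d dvd card C" and "d dvd 2 * m"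
  shows "X \<in> unfold_part \<Longrightarrow> d dvd card X"
proof (erule unfold_part_cases)
  have "card (\<Union>Q) mod d = card E mod d"
    using card_Union_mod_eq_block partition_on_finite_blocks[OF partition] partition_onD2[OF partition] E dvd
    by blast
  then have "card E mod d = m mod d" using partition_onD1[OF partition, symmetric] by simp
  then have "2 * card E mod d = 2 * m mod d" by (metis mod_mult_right_eq)
  then show "d dvd card X" if "X = center"
    using that card_center \<open>d dvd 2 * m\<close> by (simp add: dvd_eq_mod_eq_0)
qed (simp_all add: card_lift card_rot_lift dvd)

text \<open>On the window {base..<base+m}, fold_pt m is a rotation of the circle, so it reflects crossings.\<close>
lemma lift_not_crosses:
  assumes C: "C \<in> Q" and C': "C' \<in> Q" and ne: "C \<noteq> C'"
  shows "\<not> crosses (lift C) (lift C')"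
proof
  assume c: "crosses (lift C) (lift C')"
  have mono: "fold_pt m x < fold_pt m y" if "x < y" "y < m + 1 \<or> m + 1 \<le> x" for x y
    using that by (auto simp: fold_pt_def)
  have jump: "fold_pt m y < fold_pt m x"
    if "x \<in> {base..<base + m}" "y \<in> {base..<base + m}" "x < m + 1" "m + 1 \<le> y" for x y
    using that by (auto simp: fold_pt_def)
  have "crosses (fold_pt m ` lift C) (fold_pt m ` lift C') \<or>
      crosses (fold_pt m ` lift C') (fold_pt m ` lift C)"
    by (rule crosses_image_rotation[where t="m+1", OF _ _ _ lift_subset_window[OF C]
          lift_subset_window[OF C'] c]) (use mono jump in auto)
  then have "crosses C C' \<or> crosses C' C" using fold_pt_image_lift C C' by simp
  then show False using not_crosses[OF C C' ne] not_crosses[OF C' C ne[symmetric]] by blast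
qed

lemma base_mem_lift: "base \<in> lift E"
  unfolding lift_def using base_mem by (force simp: window_pt_def)

lemma center_inside_window:
  assumes "x \<in> center" "base < x" "x < base + m"
  shows "x \<in> lift E"
proof -
  have x: "x \<in> {1..2*m}" using center_subset assms(1) by blast
  have "fold_pt m x \<in> E" using fold_pt_image_center assms(1) by blast
  moreover have "window_pt m base (fold_pt m x) = x" using window_pt_fold_pt[OF x base_bounds] assms by simp
  ultimately show ?thesis unfolding lift_def by (metis image_eqI)
qed

text \<open>Inside the window the central block looks like lift E, and outside it only matters that
  base lies in both; so a crossing with the central block yields one with lift E.\<close>
lemma center_lift_not_crosses:
  assumes C: "C \<in> Q" "C \<noteq> E"
  shows "\<not> crosses center (lift C)" "\<not> crosses (lift C) center"
proof -
  have no_lift_E: "\<not> crosses (lift E) (lift C) \<and> \<not> crosses (lift C) (lift E)"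
    using lift_not_crosses[OF E C(1)] lift_not_crosses[OF C(1) E] C(2) by auto
  show "\<not> crosses center (lift C)"
  proof
    assume "crosses center (lift C)"
    then obtain a b c d where o: "a < b" "b < c" "c < d"
      and mem: "a \<in> center" "c \<in> center" "b \<in> lift C" "d \<in> lift C"
      unfolding crosses_def by blast
    have "base < b" "d < base + m" using lift_inside[OF C mem(3)] lift_inside[OF C mem(4)] by simp_all
    then have "c \<in> lift E" using center_inside_window[OF mem(2)] o by simp
    then have "crosses (lift E) (lift C)"
      unfolding crosses_def using base_mem_lift o mem \<open>base < b\<close> by blast
    then show False using no_lift_E by blast
  qed
  show "\<not> crosses (lift C) center"
  proof
    assume "crosses (lift C) center"
    then obtain a b c d where o: "a < b" "b < c" "c < d"
      and mem: "a \<in> lift C" "c \<in> lift C" "b \<in> center" "d \<in> center"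
      unfolding crosses_def by blast
    have "base < a" "c < base + m" using lift_inside[OF C mem(1)] lift_inside[OF C mem(2)] by simp_all
    then have "b \<in> lift E" using center_inside_window[OF mem(3)] o by simp
    then have "crosses (lift E) (lift C)"
      unfolding crosses_def using base_mem_lift o mem \<open>base < a\<close> by blast
    then show False using no_lift_E by blast
  qed
qed

lemma lift_rot_lift_not_crosses:
  assumes "C \<in> Q" "C \<noteq> E" "C' \<in> Q" "C' \<noteq> E"
  shows "\<not> crosses (lift C) (rot m ` lift C')" "\<not> crosses (rot m ` lift C') (lift C)"
  using not_crosses_inside_outside[of "lift C" base "base + m" "rot m ` lift C'"]
    not_crosses_outside_inside[of "lift C" base "base + m" "rot m ` lift C'"]
    lift_inside[OF assms(1,2)] rot_lift_outside[OF assms(3,4)] by blast+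

lemma center_mem_unfold_part: "center \<in> unfold_part"
  unfolding unfold_part_def by blast

lemma rot_rot_unfold_block: "X \<in> unfold_part \<Longrightarrow> rot m ` rot m ` X = X"
  using rot_image_rot_image unfold_part_block_subset by blast

lemma crosses_rot_unfold_blocks:
  "X \<in> unfold_part \<Longrightarrow> Y \<in> unfold_part \<Longrightarrow> crosses X Y \<Longrightarrow>
   crosses (rot m ` X) (rot m ` Y) \<or> crosses (rot m ` Y) (rot m ` X)"
  using crosses_rot_image unfold_part_block_subset by blast

lemma lift_not_crosses_unfold_block:
  assumes C: "C \<in> Q" "C \<noteq> E" and Y: "Y \<in> unfold_part" "Y \<noteq> lift C"
  shows "\<not> crosses (lift C) Y \<and> \<not> crosses Y (lift C)"
  using Y(1)
proof (cases rule: unfold_part_cases)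
  case 1
  then show ?thesis using center_lift_not_crosses[OF C] by simp
next
  case (2 C')
  then show ?thesis using lift_not_crosses C(1) Y(2) by blast
next
  case (3 C')
  then show ?thesis using lift_rot_lift_not_crosses C by blast
qed

lemma center_not_crosses_unfold_block:
  assumes Y: "Y \<in> unfold_part" "Y \<noteq> center"
  shows "\<not> crosses center Y \<and> \<not> crosses Y center"
  using Y(1)
proof (cases rule: unfold_part_cases)
  case 1
  then show ?thesis using Y(2) by simp
next
  case (2 C)
  then show ?thesis using center_lift_not_crosses by blast
next
  case (3 C)
  then have "rot m ` Y = lift C" using rot_rot_lift by simp
  then have "crosses center Y \<or> crosses Y center \<Longrightarrow> crosses center (lift C) \<or> crosses (lift C) center"
    using crosses_rot_unfold_blocks[OF center_mem_unfold_part Y(1)]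
      crosses_rot_unfold_blocks[OF Y(1) center_mem_unfold_part] rot_center by auto
  then show ?thesis using center_lift_not_crosses[OF 3(1,2)] by blast
qed

lemma noncrossing_unfold_part: "noncrossing unfold_part"
  unfolding noncrossing_iff_not_crosses
proof (intro ballI impI notI)
  fix X Y assume X: "X \<in> unfold_part" and Y: "Y \<in> unfold_part" and "X \<noteq> Y"
    and c: "crosses X Y"
  show False
    using X
  proof (cases rule: unfold_part_cases)
    case 1
    then show False using center_not_crosses_unfold_block Y \<open>X \<noteq> Y\<close> c by blast
  next
    case (2 C)
    then show False using lift_not_crosses_unfold_block Y \<open>X \<noteq> Y\<close> c by blast
  next
    case (3 C)
    have "rot m ` Y \<noteq> lift C" using rot_rot_unfold_block[OF Y] 3(3) \<open>X \<noteq> Y\<close> by auto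
    moreover have "crosses (lift C) (rot m ` Y) \<or> crosses (rot m ` Y) (lift C)"
      using crosses_rot_unfold_blocks[OF X Y c] 3 rot_rot_lift by simp
    ultimately show False
      using lift_not_crosses_unfold_block[OF 3(1,2) rot_closed_unfold_part[OF Y]] by blast
  qed
qed

lemma sym_nc_unfold_part: "sym_nc_partition m unfold_part"
  using partition_unfold_part noncrossing_unfold_part rot_closed_unfold_part
  by (simp add: sym_nc_partition_def)

lemma sym_nc_dvd_unfold_part:
  assumes "\<And>C. C \<in> Q \<Longrightarrow> C \<noteq> E \<Longrightarrow> d dvd card C" "d dvd 2 * m" "\<not> d dvd m"
  shows "sym_nc_dvd m unfold_part d"
  unfolding sym_nc_dvd_def sym_nc_dvd_axioms_def
  using sym_nc_unfold_part dvd_card_unfold_part[OF assms(1,2)] assms(3) by blast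

end

lemma NC_r_subset_fold_part_image:
  assumes "d * n + r = m" "d dvd 2 * m" "\<not> d dvd m"
  shows "NC_r d n r \<subseteq> fold_part m ` {P. sym_nc_dvd m P d}"
proof
  fix Q assume "Q \<in> NC_r d n r"
  then obtain E where Q: "pointed_nc_partition m Q E"
    and dvd: "\<And>C. C \<in> Q \<Longrightarrow> C \<noteq> E \<Longrightarrow> d dvd card C"
    unfolding NC_r_def assms(1) pointed_nc_partition_def by blast
  interpret pointed_nc_partition m Q E by (fact Q)
  have "unfold_part \<in> {P. sym_nc_dvd m P d}" using sym_nc_dvd_unfold_part[OF dvd assms(2,3)] by simp
  then show "Q \<in> fold_part m ` {P. sym_nc_dvd m P d}" using fold_part_unfold_part by (metis image_eqI)
qed

theorem theorem6p1:
  fixes n k :: nat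
  assumes "0 < n" and "0 < k"
  shows "refinement_posets_iso (NC_tilde k n) (NC_r (2 * k) n k)"
proof -
  define m where "m = k * (2 * n + 1)"
  have m_eq: "2 * k * n + k = m" and "m = k + n * (2 * k)" and dvd_2m: "2 * k dvd 2 * m"
    unfolding m_def by (simp_all add: algebra_simps)
  then have not_dvd_m: "\<not> 2 * k dvd m" using \<open>0 < k\<close> by (simp add: dvd_eq_mod_eq_0)
  have NC_tilde: "NC_tilde k n = {P. sym_nc_dvd m P (2 * k)}"
    unfolding NC_tilde_def Let_def m_def[symmetric] sym_nc_dvd_def sym_nc_dvd_axioms_def
      sym_nc_partition_def
    using not_dvd_m by auto
  have "fold_part m ` NC_tilde k n = NC_r (2 * k) n k"
    using sym_nc_dvd.fold_part_in_NC_r[OF _ m_eq] NC_r_subset_fold_part_image[OF m_eq dvd_2m not_dvd_m]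
    unfolding NC_tilde by blast
  moreover have "refines P P' \<longleftrightarrow> refines (fold_part m P) (fold_part m P')"
    if "P \<in> NC_tilde k n" "P' \<in> NC_tilde k n" for P P'
    using that fold_part_mono sym_nc_dvd.fold_part_reflects_refines unfolding NC_tilde by blast
  moreover have "partition_on {1..2*m} P" if "P \<in> NC_tilde k n" for P
    using that sym_nc_partition.partition[OF sym_nc_dvd.axioms(1)] unfolding NC_tilde by blast
  ultimately show ?thesis by (intro refinement_posets_iso_onto)
qed

end
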